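(* Let $T(t,\tau)$ be an evolution family on a Banach space $X$ and $\|\cdot\|_t$ a family of norms satisfying $\|x\|\le\|x\|_t\le Ct^\epsilon\|x\|$ ($x\in X$, $t\ge1$) for some $C>0$, $\epsilon\ge0$, and $\|T(t,s)x\|_t\le M(t/s)^a\|x\|_s$ for all $t\ge s\ge1$, $x\in X$, with some $M,a>0$. Let $B:[1,\infty)\to B(X)$ be strongly continuous with $\|B(t)\|\le c/t^{1+\epsilon}$ for $t\ge1$, and let $U(t,\tau)$ be the evolution family satisfying $U(t,\tau)=T(t,\tau)+\int_\tau^tT(t,s)B(s)U(s,\tau)\,ds$ for $t\ge\tau\ge1$. Then $$\|U(t,\tau)x\|_t\le M(t/\tau)^{a+cCM}\|x\|_\tau\quad\text{for all } t\ge\tau\ge1,\ x\in X.$$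
   Context: Let $X$ be a Banach space with norm $\|\cdot\|$, $B(X)$ the bounded linear operators on $X$. An evolution family is a family of bounded linear operators $T(t,\tau)$ on $X$, $t\ge\tau\ge1$, such that $T(t,t)=\mathrm{Id}$ for $t\ge1$, $T(t,s)T(s,\tau)=T(t,\tau)$ for $t\ge s\ge\tau\ge1$, and for each $\tau\ge1$ and $x\in X$ the map $s\mapsto T(s,\tau)x$ is continuous on $[\tau,\infty)$. A family of norms $\|\cdot\|_t$ is also assumed to have $t\mapsto\|x\|_t$ measurable for each $x$. *)

theory Defs
  imports "HOL-Analysis.Analysis"
begin

text \<open>Evolution family on [1,\<infinity>): T t \<tau> defined (meaningfully) for t \<ge> \<tau> \<ge> 1.\<close>
definition evolution_family :: "(real \<Rightarrow> real \<Rightarrow> ('a::banach \<Rightarrow>\<^sub>L 'a)) \<Rightarrow> bool" where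
  "evolution_family T \<longleftrightarrow>
     (\<forall>t\<ge>1. T t t = id_blinfun) \<and>
     (\<forall>t s \<tau>. t \<ge> s \<and> s \<ge> \<tau> \<and> \<tau> \<ge> 1 \<longrightarrow> T t s o\<^sub>L T s \<tau> = T t \<tau>) \<and>
     (\<forall>\<tau>\<ge>1. \<forall>x. continuous_on {\<tau>..} (\<lambda>s. blinfun_apply (T s \<tau>) x))"

definition is_norm :: "('a::real_normed_vector \<Rightarrow> real) \<Rightarrow> bool" where
  "is_norm n \<longleftrightarrow>
     (\<forall>x. n x \<ge> 0) \<and> (\<forall>x. n x = 0 \<longleftrightarrow> x = 0) \<and>
     (\<forall>x y. n (x + y) \<le> n x + n y) \<and> (\<forall>r x. n (r *\<^sub>R x) = \<bar>r\<bar> * n x)"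

definition norm_family :: "(real \<Rightarrow> 'a::real_normed_vector \<Rightarrow> real) \<Rightarrow> bool" where
  "norm_family nrm \<longleftrightarrow>
     (\<forall>t\<ge>1. is_norm (nrm t)) \<and>
     (\<forall>x. (\<lambda>t. nrm t x) \<in> borel_measurable (restrict_space lborel {1..}))"

end

theory Submission
  imports Defs
begin

text \<open>Put \<open>v(r) = r\<^sup>-\<^sup>a \<parallel>U(r,\<tau>)x\<parallel>\<^sub>r\<close>. Estimating the perturbation integral with the bounds on
  \<open>T\<close>, \<open>B\<close> and the norms gives \<open>v(s) \<le> M \<tau>\<^sup>-\<^sup>a \<parallel>x\<parallel>\<^sub>\<tau> + \<integral>\<^sub>\<tau>\<^sup>s cCM v(r)/r dr\<close>, and Gronwall's lemma
  yields \<open>v(t) \<le> M \<tau>\<^sup>-\<^sup>a \<parallel>x\<parallel>\<^sub>\<tau> (t/\<tau>)\<^sup>c\<^sup>C\<^sup>M\<close>. Since \<open>r \<mapsto> \<parallel>U(r,\<tau>)x\<parallel>\<^sub>r\<close> need not be measurable,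
  the integral inequality is only available against integrable majorants of \<open>v\<close>, and Gronwall's
  lemma is proved in that form by a continuity argument: \<open>v\<close> stays below \<open>1 + \<delta>\<close> times the
  explicit solution, on intervals growing by a fixed step.\<close>

lemma seminorm_nonneg_combination_le:
  fixes n :: "'a::real_vector \<Rightarrow> real"
  assumes tri: "\<And>x y. n (x + y) \<le> n x + n y" and hom: "\<And>r x. n (r *\<^sub>R x) = \<bar>r\<bar> * n x"
    and "\<And>i. i \<in> I \<Longrightarrow> 0 \<le> c i" and "\<And>i. i \<in> I \<Longrightarrow> n (f i) \<le> g i"
  shows "n (\<Sum>i\<in>I. c i *\<^sub>R f i) \<le> (\<Sum>i\<in>I. c i * g i)"
  using assms(3,4)
proof (induct I rule: infinite_finite_induct)
  case (insert i I)
  have "n (c i *\<^sub>R f i + (\<Sum>j\<in>I. c j *\<^sub>R f j)) \<le> c i * n (f i) + n (\<Sum>j\<in>I. c j *\<^sub>R f j)"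
    using tri hom insert.prems by (metis abs_of_nonneg insertI1)
  also have "\<dots> \<le> c i * g i + (\<Sum>j\<in>I. c j * g j)"
    using insert by (intro add_mono mult_left_mono) auto
  finally show ?case using insert by simp
qed (use hom[of 0 0] in simp_all)

text \<open>No measurability of \<open>n \<circ> f\<close> is required, only a majorant with an integral.\<close>

lemma seminorm_has_integral_le:
  fixes f :: "'b::euclidean_space \<Rightarrow> 'a::real_normed_vector" and n :: "'a \<Rightarrow> real"
  assumes f: "(f has_integral I) (cbox a b)" and g: "(g has_integral J) (cbox a b)"
    and tri: "\<And>x y. n (x + y) \<le> n x + n y" and hom: "\<And>r x. n (r *\<^sub>R x) = \<bar>r\<bar> * n x"
    and n_le: "\<And>x. n x \<le> K * norm x" and le: "\<And>x. x \<in> cbox a b \<Longrightarrow> n (f x) \<le> g x"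
  shows "n I \<le> J"
proof (rule field_le_epsilon)
  fix e :: real assume "e > 0"
  define K' where "K' = \<bar>K\<bar> + 1"
  have "K' > 0" by (simp add: K'_def)
  then obtain \<gamma> where "gauge \<gamma>" and \<gamma>: "\<And>\<D>. \<D> tagged_division_of cbox a b \<Longrightarrow> \<gamma> fine \<D> \<Longrightarrow>
      norm ((\<Sum>(x, k)\<in>\<D>. Henstock_Kurzweil_Integration.content k *\<^sub>R f x) - I) < e / (2 * K')"
    using f \<open>e > 0\<close> unfolding has_integral by (metis divide_pos_pos zero_less_mult_iff zero_less_numeral)
  obtain \<delta> where "gauge \<delta>" and \<delta>: "\<And>\<D>. \<D> tagged_division_of cbox a b \<Longrightarrow> \<delta> fine \<D> \<Longrightarrow>
      norm ((\<Sum>(x, k)\<in>\<D>. Henstock_Kurzweil_Integration.content k *\<^sub>R g x) - J) < e / 2"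
    using g \<open>e > 0\<close> unfolding has_integral by (metis half_gt_zero)
  obtain \<D> where \<D>: "\<D> tagged_division_of cbox a b" and fine: "(\<lambda>x. \<gamma> x \<inter> \<delta> x) fine \<D>"
    using fine_division_exists gauge_Int[OF \<open>gauge \<gamma>\<close> \<open>gauge \<delta>\<close>] by blast
  define S where "S = (\<Sum>(x, k)\<in>\<D>. Henstock_Kurzweil_Integration.content k *\<^sub>R f x)"
  define Sg where "Sg = (\<Sum>(x, k)\<in>\<D>. Henstock_Kurzweil_Integration.content k * g x)"
  have "n (I - S) \<le> K * norm (I - S)" by (rule n_le)
  also have "\<dots> \<le> K' * norm (I - S)" by (rule mult_right_mono) (simp_all add: K'_def)
  also have "\<dots> \<le> K' * (e / (2 * K'))"
    using \<gamma>[OF \<D>] fine \<open>K' > 0\<close> by (intro mult_left_mono) (auto simp: S_def norm_minus_commute fine_Int)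
  finally have "n (I - S) \<le> e / 2" using \<open>K' > 0\<close> by simp
  moreover have "n S \<le> Sg"
    unfolding S_def Sg_def split_def
  proof (rule seminorm_nonneg_combination_le[OF tri hom])
    fix xk assume "xk \<in> \<D>"
    then show "0 \<le> Henstock_Kurzweil_Integration.content (snd xk)" by simp
    show "n (f (fst xk)) \<le> g (fst xk)"
      using \<D> \<open>xk \<in> \<D>\<close> le by (metis prod.collapse tagged_division_ofD(2,3) subsetD)
  qed
  moreover have "\<bar>Sg - J\<bar> < e / 2"
    using \<delta>[OF \<D>] fine by (simp add: Sg_def fine_Int)
  moreover have "n I \<le> n S + n (I - S)" using tri[of S "I - S"] by simp
  ultimately show "n I \<le> J + e" by linarith
qed

lemma real_induction_bounded_step:
  fixes P :: "real \<Rightarrow> bool"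
  assumes "\<tau> \<le> t" "h > 0"
    and step: "\<And>D s. \<tau> \<le> D \<Longrightarrow> D \<le> s \<Longrightarrow> s \<le> t \<Longrightarrow> s - D \<le> h \<Longrightarrow>
                  (\<And>r. \<tau> \<le> r \<Longrightarrow> r < D \<Longrightarrow> P r) \<Longrightarrow> P s"
  shows "P t"
proof -
  define S where "S = {t' \<in> {\<tau>..t}. \<forall>r\<in>{\<tau>..t'}. P r}"
  have "P \<tau>" using step[of \<tau> \<tau>] \<open>\<tau> \<le> t\<close> \<open>h > 0\<close> by simp
  then have "\<tau> \<in> S" using \<open>\<tau> \<le> t\<close> by (auto simp: S_def)
  have "bdd_above S" by (auto simp: S_def bdd_above_def)
  define D where "D = Sup S"
  have "\<tau> \<le> D" unfolding D_def using \<open>\<tau> \<in> S\<close> \<open>bdd_above S\<close> by (rule cSup_upper)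
  have "D \<le> t" unfolding D_def using \<open>\<tau> \<in> S\<close> by (intro cSup_least) (auto simp: S_def)
  have below: "P r" if "\<tau> \<le> r" "r < D" for r
  proof -
    obtain t' where "t' \<in> S" "r < t'"
      using \<open>r < D\<close> less_cSup_iff[of S r] \<open>\<tau> \<in> S\<close> \<open>bdd_above S\<close> by (auto simp: D_def)
    then show ?thesis using that by (auto simp: S_def)
  qed
  have "D = t"
  proof (rule ccontr)
    assume "D \<noteq> t"
    have "P r" if "\<tau> \<le> r" "r \<le> min (D + h) t" for r
      using step[of D r] below that \<open>\<tau> \<le> D\<close> by (cases "r < D") auto
    then have "min (D + h) t \<in> S"
      using \<open>D \<le> t\<close> \<open>\<tau> \<le> D\<close> \<open>h > 0\<close> by (auto simp: S_def)
    then have "min (D + h) t \<le> D" unfolding D_def using \<open>bdd_above S\<close> by (rule cSup_upper)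
    then show False using \<open>D \<le> t\<close> \<open>D \<noteq> t\<close> \<open>h > 0\<close> by linarith
  qed
  then show ?thesis using step[of D t] below \<open>\<tau> \<le> D\<close> \<open>h > 0\<close> by simp
qed

context
  fixes v \<beta> \<phi> :: "real \<Rightarrow> real" and \<tau> t A L :: real
  assumes "\<tau> \<le> t" and "A > 0" and \<phi>_init: "\<phi> \<tau> = A" and \<phi>_mono: "mono_on {\<tau>..t} \<phi>"
    and \<phi>_deriv: "\<And>r. r \<in> {\<tau>..t} \<Longrightarrow> (\<phi> has_real_derivative \<beta> r * \<phi> r) (at r within {\<tau>..t})"
    and \<beta>_nonneg: "\<And>r. r \<in> {\<tau>..t} \<Longrightarrow> \<beta> r \<ge> 0"
    and \<beta>v_bound: "\<And>r. r \<in> {\<tau>..t} \<Longrightarrow> \<beta> r * v r \<le> L"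
    and integral_ineq: "\<And>s w W. s \<in> {\<tau>..t} \<Longrightarrow> (w has_integral W) {\<tau>..s} \<Longrightarrow>
                          (\<And>r. r \<in> {\<tau>..s} \<Longrightarrow> \<beta> r * v r \<le> w r) \<Longrightarrow> v s \<le> A + W"
begin

text \<open>Feed the integral inequality the majorant \<open>(1 + \<delta>) \<beta> \<phi>\<close> on \<open>[\<tau>, D)\<close>, whose integral is
  known from \<open>\<phi>' = \<beta> \<phi>\<close>, and the crude constant \<open>L'\<close> beyond \<open>D\<close>.\<close>

lemma gronwall_continuation:
  assumes "0 \<le> \<delta>" "\<tau> \<le> D" "D \<le> s" "s \<le> t" "L \<le> L'"
    and below: "\<And>r. \<tau> \<le> r \<Longrightarrow> r < D \<Longrightarrow> v r \<le> (1 + \<delta>) * \<phi> r"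
  shows "v s \<le> (1 + \<delta>) * \<phi> s - \<delta> * A + (s - D) * L'"
proof -
  define w where "w r = (if r < D then (1 + \<delta>) * (\<beta> r * \<phi> r) else L')" for r
  have "((\<lambda>r. \<beta> r * \<phi> r) has_integral \<phi> D - \<phi> \<tau>) {\<tau>..D}"
    using \<open>\<tau> \<le> D\<close> \<open>D \<le> s\<close> \<open>s \<le> t\<close>
    by (intro fundamental_theorem_of_calculus)
       (auto simp: has_real_derivative_iff_has_vector_derivative[symmetric]
             intro!: has_field_derivative_subset[OF \<phi>_deriv])
  then have "(w has_integral (1 + \<delta>) * (\<phi> D - A)) {\<tau>..D}"
    by (intro has_integral_spike_finite[of "{D}", OF _ _ has_integral_mult_right])
       (auto simp: w_def \<phi>_init)
  moreover have "(w has_integral (s - D) * L') {D..s}"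
  proof -
    have "((\<lambda>_. L') has_integral (s - D) * L') {D..s}"
      using has_integral_const_real[of L' D s] \<open>D \<le> s\<close> by simp
    moreover have "w r = L'" if "r \<in> {D..s}" for r
      using that by (simp add: w_def)
    ultimately show ?thesis
      using has_integral_cong[of "{D..s}" w "\<lambda>_. L'"] by simp
  qed
  ultimately have "(w has_integral (1 + \<delta>) * (\<phi> D - A) + (s - D) * L') {\<tau>..s}"
    by (rule has_integral_combine[OF \<open>\<tau> \<le> D\<close> \<open>D \<le> s\<close>])
  moreover have "\<beta> r * v r \<le> w r" if "r \<in> {\<tau>..s}" for r
  proof (cases "r < D")
    case True
    have "\<beta> r * v r \<le> \<beta> r * ((1 + \<delta>) * \<phi> r)"
      using below[of r] that \<beta>_nonneg[of r] True \<open>s \<le> t\<close> by (intro mult_left_mono) auto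
    then show ?thesis using True by (simp add: w_def mult_ac)
  next
    case False
    then show ?thesis using \<beta>v_bound[of r] that \<open>s \<le> t\<close> \<open>L \<le> L'\<close> by (auto simp: w_def)
  qed
  ultimately have "v s \<le> A + ((1 + \<delta>) * (\<phi> D - A) + (s - D) * L')"
    using \<open>\<tau> \<le> D\<close> \<open>D \<le> s\<close> \<open>s \<le> t\<close> by (intro integral_ineq) auto
  moreover have "(1 + \<delta>) * (\<phi> D - A) \<le> (1 + \<delta>) * (\<phi> s - A)"
    using \<phi>_mono \<open>\<tau> \<le> D\<close> \<open>D \<le> s\<close> \<open>s \<le> t\<close> \<open>0 \<le> \<delta>\<close>
    by (intro mult_left_mono) (auto simp: mono_on_def)
  moreover have "(1 + \<delta>) * (\<phi> s - A) = (1 + \<delta>) * \<phi> s - A - \<delta> * A"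
    by (simp add: algebra_simps)
  ultimately show ?thesis by linarith
qed

lemma gronwall_comparison_slack:
  assumes "\<delta> > 0"
  shows "v t \<le> (1 + \<delta>) * \<phi> t"
proof -
  define L' where "L' = max L 0"
  define h where "h = \<delta> * A / (L' + 1)"
  have "h > 0" using \<open>\<delta> > 0\<close> \<open>A > 0\<close> by (simp add: h_def L'_def)
  have hL': "h * L' \<le> \<delta> * A"
    using \<open>\<delta> > 0\<close> \<open>A > 0\<close> by (simp add: h_def L'_def field_simps)
  show ?thesis
  proof (rule real_induction_bounded_step[OF \<open>\<tau> \<le> t\<close> \<open>h > 0\<close>])
    fix D s assume Ds: "\<tau> \<le> D" "D \<le> s" "s \<le> t" "s - D \<le> h"
      and below: "\<And>r. \<tau> \<le> r \<Longrightarrow> r < D \<Longrightarrow> v r \<le> (1 + \<delta>) * \<phi> r"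
    have "(s - D) * L' \<le> h * L'"
      using Ds by (intro mult_right_mono) (auto simp: L'_def)
    then show "v s \<le> (1 + \<delta>) * \<phi> s"
      using gronwall_continuation[of \<delta> D s L'] below Ds \<open>\<delta> > 0\<close> hL' by (simp add: L'_def)
  qed
qed

lemma gronwall_comparison: "v t \<le> \<phi> t"
proof (rule field_le_epsilon)
  fix e :: real assume "e > 0"
  have "\<phi> t > 0"
    using \<phi>_mono \<phi>_init \<open>\<tau> \<le> t\<close> \<open>A > 0\<close> by (auto simp: mono_on_def intro: less_le_trans)
  then have "(1 + e / \<phi> t) * \<phi> t = \<phi> t + e" by (simp add: field_simps)
  then show "v t \<le> \<phi> t + e"
    using gronwall_comparison_slack[of "e / \<phi> t"] \<open>e > 0\<close> \<open>\<phi> t > 0\<close> by simp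
qed

end

lemma gronwall_power_law:
  fixes v :: "real \<Rightarrow> real"
  assumes "0 < \<tau>" "\<tau> \<le> t" "A > 0" "k \<ge> 0"
    and kv_bound: "\<And>r. r \<in> {\<tau>..t} \<Longrightarrow> k / r * v r \<le> L"
    and integral_ineq: "\<And>s w W. s \<in> {\<tau>..t} \<Longrightarrow> (w has_integral W) {\<tau>..s} \<Longrightarrow>
                          (\<And>r. r \<in> {\<tau>..s} \<Longrightarrow> k / r * v r \<le> w r) \<Longrightarrow> v s \<le> A + W"
  shows "v t \<le> A * (t / \<tau>) powr k"
proof (rule gronwall_comparison[where \<beta> = "\<lambda>r. k / r" and \<phi> = "\<lambda>r. A * (r / \<tau>) powr k"])
  show "A * (\<tau> / \<tau>) powr k = A" using \<open>0 < \<tau>\<close> by simp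
  show "mono_on {\<tau>..t} (\<lambda>r. A * (r / \<tau>) powr k)"
  proof (rule mono_onI)
    fix r r' assume "r \<in> {\<tau>..t}" "r \<le> r'"
    then have "(r / \<tau>) powr k \<le> (r' / \<tau>) powr k"
      using assms by (intro powr_mono2 divide_right_mono) auto
    then show "A * (r / \<tau>) powr k \<le> A * (r' / \<tau>) powr k"
      using \<open>A > 0\<close> by simp
  qed
next
  fix r assume r: "r \<in> {\<tau>..t}"
  then have "r > 0" using \<open>0 < \<tau>\<close> by simp
  show "k / r \<ge> 0" using \<open>k \<ge> 0\<close> \<open>r > 0\<close> by simp
  have "((\<lambda>r. A * (r / \<tau>) powr k) has_real_derivative A * (k * (r / \<tau>) powr (k - 1) * (1 / \<tau>)))
          (at r)"
    using \<open>r > 0\<close> \<open>0 < \<tau>\<close>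
    by (intro DERIV_cmult DERIV_chain2[OF has_real_derivative_powr] derivative_eq_intros) auto
  moreover have "A * (k * (r / \<tau>) powr (k - 1) * (1 / \<tau>)) = k / r * (A * (r / \<tau>) powr k)"
    using \<open>r > 0\<close> \<open>0 < \<tau>\<close> by (simp add: powr_diff)
  ultimately show "((\<lambda>r. A * (r / \<tau>) powr k) has_real_derivative k / r * (A * (r / \<tau>) powr k))
          (at r within {\<tau>..t})"
    by (simp add: has_field_derivative_at_within)
qed (use assms in auto)

locale perturbed_evolution =
  fixes T U :: "real \<Rightarrow> real \<Rightarrow> ('a::banach \<Rightarrow>\<^sub>L 'a)"
    and B :: "real \<Rightarrow> ('a \<Rightarrow>\<^sub>L 'a)"
    and nrm :: "real \<Rightarrow> 'a \<Rightarrow> real"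
    and C \<epsilon> M a c :: real
  assumes evU: "evolution_family U"
    and nf: "norm_family nrm"
    and C_pos: "C > 0" and eps_nonneg: "\<epsilon> \<ge> 0"
    and nrm_bounds: "\<And>x t. t \<ge> 1 \<Longrightarrow> norm x \<le> nrm t x \<and> nrm t x \<le> C * t powr \<epsilon> * norm x"
    and M_pos: "M > 0" and a_pos: "a > 0"
    and T_bound: "\<And>t s x. t \<ge> s \<Longrightarrow> s \<ge> 1 \<Longrightarrow>
                    nrm t (blinfun_apply (T t s) x) \<le> M * (t / s) powr a * nrm s x"
    and B_bound: "\<And>t. t \<ge> 1 \<Longrightarrow> norm (B t) \<le> c / t powr (1 + \<epsilon>)"
    and U_eq: "\<And>t \<tau> x. t \<ge> \<tau> \<Longrightarrow> \<tau> \<ge> 1 \<Longrightarrow>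
        ((\<lambda>s. blinfun_apply (T t s) (blinfun_apply (B s) (blinfun_apply (U s \<tau>) x)))
           has_integral (blinfun_apply (U t \<tau>) x - blinfun_apply (T t \<tau>) x)) {\<tau>..t}"
begin

lemma nrm_nonneg: "r \<ge> 1 \<Longrightarrow> nrm r y \<ge> 0"
  and nrm_eq_0_iff: "r \<ge> 1 \<Longrightarrow> nrm r y = 0 \<longleftrightarrow> y = 0"
  and nrm_triangle: "r \<ge> 1 \<Longrightarrow> nrm r (y + z) \<le> nrm r y + nrm r z"
  and nrm_scaleR: "r \<ge> 1 \<Longrightarrow> nrm r (q *\<^sub>R y) = \<bar>q\<bar> * nrm r y"
  using nf by (auto simp: norm_family_def is_norm_def)

lemma c_nonneg: "c \<ge> 0"
  using B_bound[of 1] norm_ge_zero[of "B 1"] by (simp del: norm_ge_zero)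

lemma perturbation_bound:
  assumes "1 \<le> r" "r \<le> s"
  shows "nrm s (blinfun_apply (T s r) (blinfun_apply (B r) y))
           \<le> c * C * M * (s / r) powr a / r * nrm r y"
proof -
  have "norm (blinfun_apply (B r) y) \<le> norm (B r) * norm y" by (rule norm_blinfun)
  also have "\<dots> \<le> c / r powr (1 + \<epsilon>) * nrm r y"
    using B_bound[of r] nrm_bounds[of r y] c_nonneg assms by (intro mult_mono) auto
  finally have B_le: "norm (blinfun_apply (B r) y) \<le> c / r powr (1 + \<epsilon>) * nrm r y" .
  have "nrm s (blinfun_apply (T s r) (blinfun_apply (B r) y))
          \<le> M * (s / r) powr a * nrm r (blinfun_apply (B r) y)"
    using T_bound assms by simp
  also have "\<dots> \<le> M * (s / r) powr a * (C * r powr \<epsilon> * norm (blinfun_apply (B r) y))"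
    using nrm_bounds[of r] M_pos assms by (intro mult_left_mono) auto
  also have "\<dots> \<le> M * (s / r) powr a * (C * r powr \<epsilon> * (c / r powr (1 + \<epsilon>) * nrm r y))"
    using B_le M_pos C_pos by (intro mult_left_mono) auto
  also have "\<dots> = c * C * M * (s / r) powr a / r * nrm r y"
    using assms by (simp add: powr_add)
  finally show ?thesis .
qed

lemma trajectory_bounded:
  assumes "1 \<le> \<tau>" "\<tau> \<le> t"
  obtains L where "\<And>r. r \<in> {\<tau>..t} \<Longrightarrow> nrm r (blinfun_apply (U r \<tau>) x) \<le> L"
proof -
  have "continuous_on {\<tau>..} (\<lambda>r. blinfun_apply (U r \<tau>) x)"
    using evU assms by (simp add: evolution_family_def)
  then have "continuous_on {\<tau>..t} (\<lambda>r. blinfun_apply (U r \<tau>) x)"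
    by (rule continuous_on_subset) auto
  then have "bounded ((\<lambda>r. blinfun_apply (U r \<tau>) x) ` {\<tau>..t})"
    by (intro compact_imp_bounded compact_continuous_image compact_Icc)
  then obtain N where N: "\<And>r. r \<in> {\<tau>..t} \<Longrightarrow> norm (blinfun_apply (U r \<tau>) x) \<le> N"
    unfolding bounded_iff by blast
  have "nrm r (blinfun_apply (U r \<tau>) x) \<le> C * t powr \<epsilon> * N" if r: "r \<in> {\<tau>..t}" for r
  proof -
    have "r \<ge> 1" using r assms by simp
    then have "nrm r (blinfun_apply (U r \<tau>) x) \<le> C * r powr \<epsilon> * norm (blinfun_apply (U r \<tau>) x)"
      using nrm_bounds by blast
    also have "\<dots> \<le> C * t powr \<epsilon> * N"
      using N[OF r] r \<open>r \<ge> 1\<close> C_pos eps_nonneg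
      by (intro mult_mono powr_mono2 mult_left_mono) auto
    finally show ?thesis .
  qed
  then show ?thesis by (rule that)
qed

lemma rescaled_integral_inequality:
  assumes "1 \<le> \<tau>" "\<tau> \<le> s" and w: "(w has_integral W) {\<tau>..s}"
    and w_bound: "\<And>r. r \<in> {\<tau>..s} \<Longrightarrow>
                   c * C * M / r * (r powr - a * nrm r (blinfun_apply (U r \<tau>) x)) \<le> w r"
  shows "s powr - a * nrm s (blinfun_apply (U s \<tau>) x) \<le> M * \<tau> powr - a * nrm \<tau> x + W"
proof -
  have s1: "s \<ge> 1" using assms by simp
  have integrand_le: "nrm s (blinfun_apply (T s r) (blinfun_apply (B r) (blinfun_apply (U r \<tau>) x)))
      \<le> s powr a * w r" if r: "r \<in> {\<tau>..s}" for r
  proof -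
    have "r > 0" using r assms by auto
    have "nrm s (blinfun_apply (T s r) (blinfun_apply (B r) (blinfun_apply (U r \<tau>) x)))
            \<le> c * C * M * (s / r) powr a / r * nrm r (blinfun_apply (U r \<tau>) x)"
      using perturbation_bound r assms by auto
    also have "\<dots> = s powr a * (c * C * M / r * (r powr - a * nrm r (blinfun_apply (U r \<tau>) x)))"
      using \<open>r > 0\<close> s1 by (simp add: powr_divide powr_minus field_simps)
    also have "\<dots> \<le> s powr a * w r"
      using w_bound[OF r] by (intro mult_left_mono) auto
    finally show ?thesis .
  qed
  have "nrm s (blinfun_apply (U s \<tau>) x - blinfun_apply (T s \<tau>) x) \<le> s powr a * W"
    using U_eq[OF \<open>\<tau> \<le> s\<close> \<open>1 \<le> \<tau>\<close>, folded box_real(2)]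
      has_integral_mult_right[OF w, of "s powr a", folded box_real(2)]
      nrm_triangle[OF s1] nrm_scaleR[OF s1] conjunct2[OF nrm_bounds[OF s1]]
      integrand_le[folded box_real(2)]
    by (rule seminorm_has_integral_le)
  moreover have "nrm s (blinfun_apply (T s \<tau>) x) \<le> M * (s / \<tau>) powr a * nrm \<tau> x"
    using T_bound assms by simp
  moreover have "nrm s (blinfun_apply (U s \<tau>) x)
      \<le> nrm s (blinfun_apply (T s \<tau>) x) + nrm s (blinfun_apply (U s \<tau>) x - blinfun_apply (T s \<tau>) x)"
    using nrm_triangle[OF s1, of "blinfun_apply (T s \<tau>) x"
                         "blinfun_apply (U s \<tau>) x - blinfun_apply (T s \<tau>) x"] by simp
  moreover have "M * (s / \<tau>) powr a * nrm \<tau> x = s powr a * (M * \<tau> powr - a * nrm \<tau> x)"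
    using assms by (simp add: powr_divide powr_minus field_simps)
  ultimately have "nrm s (blinfun_apply (U s \<tau>) x) \<le> s powr a * (M * \<tau> powr - a * nrm \<tau> x + W)"
    by (simp add: distrib_left)
  then show ?thesis
    using s1 by (simp add: powr_minus field_simps)
qed

lemma growth_bound:
  assumes "\<tau> \<le> t" "1 \<le> \<tau>"
  shows "nrm t (blinfun_apply (U t \<tau>) x) \<le> M * (t / \<tau>) powr (a + c * C * M) * nrm \<tau> x"
proof (cases "x = 0")
  case True
  have "nrm t 0 = 0" "nrm \<tau> 0 = 0" using assms nrm_eq_0_iff by auto
  then show ?thesis using True by simp
next
  case False
  define k where "k = c * C * M"
  define A where "A = M * \<tau> powr - a * nrm \<tau> x"
  define v where "v r = r powr - a * nrm r (blinfun_apply (U r \<tau>) x)" for r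
  have "k \<ge> 0" using c_nonneg C_pos M_pos by (simp add: k_def)
  have "A > 0" using False assms M_pos nrm_nonneg[of \<tau> x] nrm_eq_0_iff[of \<tau> x] by (simp add: A_def)
  obtain L where L: "\<And>r. r \<in> {\<tau>..t} \<Longrightarrow> nrm r (blinfun_apply (U r \<tau>) x) \<le> L"
    using trajectory_bounded assms by blast
  have "v t \<le> A * (t / \<tau>) powr k"
  proof (rule gronwall_power_law)
    show "0 < \<tau>" "\<tau> \<le> t" "A > 0" "k \<ge> 0" using assms \<open>A > 0\<close> \<open>k \<ge> 0\<close> by simp_all
  next
    fix r assume r: "r \<in> {\<tau>..t}"
    then have "r \<ge> 1" using assms by simp
    have "r powr - a \<le> 1"
      using \<open>r \<ge> 1\<close> a_pos ge_one_powr_ge_zero[of r a] by (simp add: powr_minus field_simps)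
    then have "v r \<le> L"
      using L[OF r] mult_left_le_one_le[OF nrm_nonneg[OF \<open>r \<ge> 1\<close>] powr_ge_zero]
      unfolding v_def by (meson order_trans)
    moreover have "v r \<ge> 0" using nrm_nonneg[OF \<open>r \<ge> 1\<close>] by (simp add: v_def)
    moreover have "k / r \<le> k" using \<open>k \<ge> 0\<close> \<open>r \<ge> 1\<close> by (simp add: divide_le_eq mult_le_cancel_left1)
    ultimately show "k / r * v r \<le> k * L"
      using \<open>k \<ge> 0\<close> \<open>r \<ge> 1\<close> by (intro mult_mono) auto
  next
    fix s w W
    assume "s \<in> {\<tau>..t}" "(w has_integral W) {\<tau>..s}" "\<And>r. r \<in> {\<tau>..s} \<Longrightarrow> k / r * v r \<le> w r"
    then show "v s \<le> A + W"
      unfolding v_def A_def k_def using assms by (intro rescaled_integral_inequality) auto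
  qed
  have "nrm t (blinfun_apply (U t \<tau>) x) = t powr a * v t"
    using assms by (simp add: v_def powr_minus)
  also have "\<dots> \<le> t powr a * (A * (t / \<tau>) powr k)"
    using \<open>v t \<le> A * (t / \<tau>) powr k\<close> by (rule mult_left_mono) simp
  also have "\<dots> = M * (t / \<tau>) powr (a + c * C * M) * nrm \<tau> x"
    using assms by (simp add: A_def k_def powr_add powr_divide powr_minus field_simps)
  finally show ?thesis .
qed

end

theorem mainTheorem15:
  fixes T U :: "real \<Rightarrow> real \<Rightarrow> ('a::banach \<Rightarrow>\<^sub>L 'a)"
    and B :: "real \<Rightarrow> ('a \<Rightarrow>\<^sub>L 'a)"
    and nrm :: "real \<Rightarrow> 'a \<Rightarrow> real"
    and C \<epsilon> M a c :: real
  assumes evT: "evolution_family T"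
    and nf: "norm_family nrm"
    and C_pos: "C > 0" and eps_nonneg: "\<epsilon> \<ge> 0"
    and nrm_bounds: "\<And>x t. t \<ge> 1 \<Longrightarrow> norm x \<le> nrm t x \<and> nrm t x \<le> C * t powr \<epsilon> * norm x"
    and M_pos: "M > 0" and a_pos: "a > 0"
    and T_bound: "\<And>t s x. t \<ge> s \<Longrightarrow> s \<ge> 1 \<Longrightarrow>
                    nrm t (blinfun_apply (T t s) x) \<le> M * (t / s) powr a * nrm s x"
    and B_cont: "\<And>x. continuous_on {1..} (\<lambda>t. blinfun_apply (B t) x)"
    and B_bound: "\<And>t. t \<ge> 1 \<Longrightarrow> norm (B t) \<le> c / t powr (1 + \<epsilon>)"
    and evU: "evolution_family U"
    and U_eq: "\<And>t \<tau> x. t \<ge> \<tau> \<Longrightarrow> \<tau> \<ge> 1 \<Longrightarrow>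
        ((\<lambda>s. blinfun_apply (T t s) (blinfun_apply (B s) (blinfun_apply (U s \<tau>) x)))
           has_integral (blinfun_apply (U t \<tau>) x - blinfun_apply (T t \<tau>) x)) {\<tau>..t}"
  shows "\<And>t \<tau> x. t \<ge> \<tau> \<Longrightarrow> \<tau> \<ge> 1 \<Longrightarrow>
           nrm t (blinfun_apply (U t \<tau>) x) \<le> M * (t / \<tau>) powr (a + c * C * M) * nrm \<tau> x"
proof -
  interpret perturbed_evolution T U B nrm C \<epsilon> M a c
    using evU nf C_pos eps_nonneg nrm_bounds M_pos a_pos T_bound B_bound U_eq
    by unfold_locales
  show "\<And>t \<tau> x. t \<ge> \<tau> \<Longrightarrow> \<tau> \<ge> 1 \<Longrightarrow>
           nrm t (blinfun_apply (U t \<tau>) x) \<le> M * (t / \<tau>) powr (a + c * C * M) * nrm \<tau> x"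
    using growth_bound by blast
qed

end
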